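(* Let $M$ be a monoid, $e\in M$ an idempotent, and $\mathfrak m\subseteq M$ a two-sided ideal with $\mathfrak m=\mathfrak m^2$. Then $\mathsf p_{Me}\pitchfork\mathbf{Sh}(\mathcal F_{\mathfrak m})$ if and only if $e\in\mathfrak m$.
   Context: $Me$ is a filtered left $M$-set; $\mathsf p_{Me}$ is the corresponding point of the topos of right $M$-sets, with direct image $\mathsf p_*(S)=\mathrm{Hom}_{\mathrm{Sets}}(Me,S)$, right action $(\alpha m)(a)=\alpha(ma)$. $\mathfrak m^2=\{xy\mid x,y\in\mathfrak m\}$. $\mathcal F_{\mathfrak m}$ is the Grothendieck topology consisting of all right ideals of $M$ containing $\mathfrak m$. A right $M$-set $X$ is an $\mathcal F_{\mathfrak m}$-sheaf if for every $\mathfrak a\in\mathcal F_{\mathfrak m}$ the map $X\to\mathrm{Hom}_M(\mathfrak a,X)$, $x\mapsto(y\mapsto xy)$, is a bijection; $\mathbf{Sh}(\mathcal F_{\mathfrak m})$ is the full subcategory of such sheaves. For a point $\mathsf p$, $\mathsf p\pitchfork\mathscr T$ means $\mathsf p_*(S)\in\mathscr T$ for every set $S$. *)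

theory Defs
  imports Main "HOL-Library.FuncSet"
begin

text \<open>The monoid M is the type 'a of class monoid_mult (M = UNIV).
  A right M-set is given by a carrier X and an action act :: 'x => 'a => 'x.\<close>

definition idempotent :: "'a::monoid_mult \<Rightarrow> bool" where
  "idempotent e \<longleftrightarrow> e * e = e"

definition right_ideal :: "'a::monoid_mult set \<Rightarrow> bool" where
  "right_ideal I \<longleftrightarrow> (\<forall>x\<in>I. \<forall>y. x * y \<in> I)"

definition two_sided_ideal :: "'a::monoid_mult set \<Rightarrow> bool" where
  "two_sided_ideal I \<longleftrightarrow> (\<forall>x\<in>I. \<forall>y. x * y \<in> I \<and> y * x \<in> I)"

definition ideal_sq :: "'a::monoid_mult set \<Rightarrow> 'a set" where
  "ideal_sq I = {x * y | x y. x \<in> I \<and> y \<in> I}"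

definition topology_F :: "'a::monoid_mult set \<Rightarrow> 'a set set" where
  "topology_F I = {A. right_ideal A \<and> I \<subseteq> A}"

definition hom_M :: "'a::monoid_mult set \<Rightarrow> 'x set \<Rightarrow> ('x \<Rightarrow> 'a \<Rightarrow> 'x) \<Rightarrow> ('a \<Rightarrow> 'x) set" where
  "hom_M A X act = {f \<in> A \<rightarrow>\<^sub>E X. \<forall>y\<in>A. \<forall>n. f (y * n) = act (f y) n}"

definition is_sheaf :: "'a::monoid_mult set set \<Rightarrow> 'x set \<Rightarrow> ('x \<Rightarrow> 'a \<Rightarrow> 'x) \<Rightarrow> bool" where
  "is_sheaf F X act \<longleftrightarrow> (\<forall>A\<in>F. bij_betw (\<lambda>x. restrict (\<lambda>y. act x y) A) X (hom_M A X act))"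

definition left_principal :: "'a::monoid_mult \<Rightarrow> 'a set" where
  "left_principal e = {m * e | m. True}"

text \<open>Direct image p_*(S) = Hom_Sets(Me, S) (extensional functions), with right action (alpha m)(a) = alpha(m a).\<close>
definition pstar_carrier :: "'a::monoid_mult \<Rightarrow> 's set \<Rightarrow> ('a \<Rightarrow> 's) set" where
  "pstar_carrier e S = left_principal e \<rightarrow>\<^sub>E S"

definition pstar_act :: "'a::monoid_mult \<Rightarrow> ('a \<Rightarrow> 's) \<Rightarrow> 'a \<Rightarrow> ('a \<Rightarrow> 's)" where
  "pstar_act e \<alpha> n = restrict (\<lambda>a. \<alpha> (n * a)) (left_principal e)"

end

theory Submission
  imports Defs
begin

text \<open>Write \<open>r\<^sub>A(\<alpha>)\<close> for the restriction \<open>y \<mapsto> \<alpha>\<cdot>y\<close> of \<open>\<alpha> \<in> p\<^sub>*(S)\<close> to a right ideal \<open>A\<close>.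
  If \<open>Me \<subseteq> A\<close>, then \<open>\<alpha>\<close> is recovered from \<open>r\<^sub>A(\<alpha>)\<close> as \<open>\<alpha>(x) = (\<alpha>\<cdot>x)(e)\<close>, and every
  \<open>M\<close>-map \<open>f : A \<rightarrow> p\<^sub>*(S)\<close> is \<open>r\<^sub>A\<close> of \<open>x \<mapsto> f(x)(e)\<close>; since \<open>e \<in> \<mathfrak>m\<close> forces \<open>Me \<subseteq> \<mathfrak>m\<close>,
  every \<open>p\<^sub>*(S)\<close> is then an \<open>\<F>\<^sub>\<mathfrak>m\<close>-sheaf. Conversely, if \<open>e \<notin> \<mathfrak>m\<close> then no product \<open>y n\<close>
  with \<open>y \<in> \<mathfrak>m\<close> equals \<open>e\<close>, so \<open>r\<^sub>\<mathfrak>m\<close> forgets the value \<open>\<alpha>(e)\<close> and cannot be injective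
  once \<open>S\<close> has two elements.\<close>

lemma left_principal_iff: "x \<in> left_principal e \<longleftrightarrow> (\<exists>k. x = k * e)"
  by (auto simp: left_principal_def)

lemma idempotent_in_left_principal: "idempotent e \<Longrightarrow> e \<in> left_principal e"
  by (auto simp: left_principal_def idempotent_def intro: exI[of _ e])

lemma left_principal_mult_idempotent:
  "idempotent e \<Longrightarrow> x \<in> left_principal e \<Longrightarrow> x * e = x"
  by (auto simp: left_principal_def idempotent_def mult.assoc)

lemma left_principal_mult_left: "x \<in> left_principal e \<Longrightarrow> n * x \<in> left_principal e"
  by (auto simp: left_principal_def mult.assoc[symmetric])

lemma left_principal_subset_two_sided_ideal:
  "two_sided_ideal I \<Longrightarrow> e \<in> I \<Longrightarrow> left_principal e \<subseteq> I"
  by (auto simp: left_principal_iff two_sided_ideal_def)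

lemma two_sided_ideal_in_topology_F: "two_sided_ideal I \<Longrightarrow> I \<in> topology_F I"
  by (auto simp: topology_F_def right_ideal_def two_sided_ideal_def)

lemma pstar_act_closed: "\<alpha> \<in> pstar_carrier e S \<Longrightarrow> pstar_act e \<alpha> n \<in> pstar_carrier e S"
  using left_principal_mult_left by (auto simp: pstar_act_def pstar_carrier_def)

lemma pstar_act_mult: "pstar_act e \<alpha> (y * n) = pstar_act e (pstar_act e \<alpha> y) n"
  by (auto simp: pstar_act_def mult.assoc left_principal_mult_left intro!: ext)

lemma pstar_act_apply_idempotent:
  assumes "idempotent e" and "x \<in> left_principal e"
  shows "pstar_act e \<alpha> x e = \<alpha> x"
  using idempotent_in_left_principal[OF assms(1)] left_principal_mult_idempotent[OF assms]
  by (simp add: pstar_act_def)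

lemma restrict_pstar_act_in_hom_M:
  assumes "right_ideal A" and "\<alpha> \<in> pstar_carrier e S"
  shows "restrict (pstar_act e \<alpha>) A \<in> hom_M A (pstar_carrier e S) (pstar_act e)"
  using assms pstar_act_closed pstar_act_mult by (auto simp: hom_M_def right_ideal_def)

lemma inj_on_restrict_pstar_act:
  assumes "idempotent e" and "left_principal e \<subseteq> A"
  shows "inj_on (\<lambda>\<alpha>. restrict (pstar_act e \<alpha>) A) (pstar_carrier e S)"
proof (rule inj_onI)
  fix \<alpha> \<beta>
  assume \<alpha>: "\<alpha> \<in> pstar_carrier e S" and \<beta>: "\<beta> \<in> pstar_carrier e S"
    and eq: "restrict (pstar_act e \<alpha>) A = restrict (pstar_act e \<beta>) A"
  show "\<alpha> = \<beta>"
  proof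
    fix x
    show "\<alpha> x = \<beta> x"
    proof (cases "x \<in> left_principal e")
      case True
      with assms eq have "pstar_act e \<alpha> x e = pstar_act e \<beta> x e"
        by (metis restrict_apply' subsetD)
      with assms(1) True show ?thesis by (simp add: pstar_act_apply_idempotent)
    next
      case False
      with \<alpha> \<beta> show ?thesis by (auto simp: pstar_carrier_def PiE_def extensional_def)
    qed
  qed
qed

lemma hom_M_eq_restrict_pstar_act:
  assumes "idempotent e" and "left_principal e \<subseteq> A"
    and f: "f \<in> hom_M A (pstar_carrier e S) (pstar_act e)"
  shows "f = restrict (pstar_act e (restrict (\<lambda>x. f x e) (left_principal e))) A"
    (is "f = restrict (pstar_act e ?\<alpha>) A")
proof
  have fX: "\<And>y. y \<in> A \<Longrightarrow> f y \<in> pstar_carrier e S"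
    and fE: "f \<in> extensional A"
    and f_mult: "\<And>y n. y \<in> A \<Longrightarrow> f (y * n) = pstar_act e (f y) n"
    using f by (auto simp: hom_M_def PiE_def)
  have e: "e \<in> left_principal e"
    using assms(1) by (rule idempotent_in_left_principal)
  fix y
  show "f y = restrict (pstar_act e ?\<alpha>) A y"
  proof (cases "y \<in> A")
    case False
    with fE show ?thesis by (auto simp: extensional_def)
  next
    case y: True
    show ?thesis
    proof
      fix b
      show "f y b = restrict (pstar_act e ?\<alpha>) A y b"
      proof (cases "b \<in> left_principal e")
        case b: True
        have "f (y * b) e = pstar_act e (f y) b e" using f_mult y by simp
        also have "\<dots> = f y b"
          using assms(1) b by (rule pstar_act_apply_idempotent)
        finally show ?thesis
          using y b left_principal_mult_left[OF b] by (simp add: pstar_act_def)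
      next
        case False
        with fX y show ?thesis
          by (auto simp: pstar_carrier_def pstar_act_def PiE_def extensional_def)
      qed
    qed
  qed
qed

lemma restrict_pstar_act_surj:
  assumes "idempotent e" and "left_principal e \<subseteq> A"
    and "f \<in> hom_M A (pstar_carrier e S) (pstar_act e)"
  shows "f \<in> (\<lambda>\<alpha>. restrict (pstar_act e \<alpha>) A) ` pstar_carrier e S"
proof -
  have "restrict (\<lambda>x. f x e) (left_principal e) \<in> pstar_carrier e S"
    using assms idempotent_in_left_principal
    by (force simp: hom_M_def pstar_carrier_def)
  with hom_M_eq_restrict_pstar_act[OF assms] show ?thesis by blast
qed

lemma is_sheaf_pstar_if_left_principal_covered:
  assumes "idempotent e" and "\<And>A. A \<in> F \<Longrightarrow> right_ideal A \<and> left_principal e \<subseteq> A"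
  shows "is_sheaf F (pstar_carrier e S) (pstar_act e)"
  unfolding is_sheaf_def bij_betw_def
proof (intro ballI conjI)
  fix A assume A: "A \<in> F"
  with assms show "inj_on (\<lambda>\<alpha>. restrict (pstar_act e \<alpha>) A) (pstar_carrier e S)"
    by (blast intro: inj_on_restrict_pstar_act)
  from A assms show "(\<lambda>\<alpha>. restrict (pstar_act e \<alpha>) A) ` pstar_carrier e S
      = hom_M A (pstar_carrier e S) (pstar_act e)"
    by (blast intro: restrict_pstar_act_in_hom_M dest: restrict_pstar_act_surj)
qed

lemma not_inj_on_restrict_pstar_act:
  fixes a b :: 's
  assumes "idempotent e" and avoids: "\<And>y n. y \<in> A \<Longrightarrow> y * n \<noteq> e" and "a \<noteq> b"
  shows "\<not> inj_on (\<lambda>\<alpha>. restrict (pstar_act e \<alpha>) A) (pstar_carrier e (UNIV :: 's set))"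
proof
  assume inj: "inj_on (\<lambda>\<alpha>. restrict (pstar_act e \<alpha>) A) (pstar_carrier e (UNIV :: 's set))"
  define \<alpha> :: "'a \<Rightarrow> 's" where "\<alpha> = restrict (\<lambda>_. a) (left_principal e)"
  have e: "e \<in> left_principal e"
    using assms(1) by (rule idempotent_in_left_principal)
  have "restrict (pstar_act e \<alpha>) A = restrict (pstar_act e (\<alpha>(e := b))) A"
    using avoids by (auto simp: pstar_act_def intro!: ext)
  moreover have "\<alpha> \<in> pstar_carrier e UNIV" "\<alpha>(e := b) \<in> pstar_carrier e UNIV"
    using e by (auto simp: \<alpha>_def pstar_carrier_def)
  ultimately have "\<alpha> = \<alpha>(e := b)"
    using inj by (auto dest: inj_onD)
  then show False
    using e \<open>a \<noteq> b\<close> by (auto simp: \<alpha>_def dest: fun_cong[of _ _ e])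
qed

theorem lemma4p5:
  fixes e :: "'a::monoid_mult" and m :: "'a set"
  assumes "idempotent e"
    and "two_sided_ideal m"
    and "m = ideal_sq m"
    and "\<exists>a b :: 's. a \<noteq> b"
  shows "(\<forall>S :: 's set. is_sheaf (topology_F m) (pstar_carrier e S) (pstar_act e)) \<longleftrightarrow> e \<in> m"
proof
  assume sheaf: "\<forall>S :: 's set. is_sheaf (topology_F m) (pstar_carrier e S) (pstar_act e)"
  show "e \<in> m"
  proof (rule ccontr)
    assume "e \<notin> m"
    with assms(2) have avoids: "\<And>y n. y \<in> m \<Longrightarrow> y * n \<noteq> e"
      by (auto simp: two_sided_ideal_def)
    obtain a b :: 's where "a \<noteq> b" using assms(4) by blast
    from not_inj_on_restrict_pstar_act[OF assms(1) avoids this] sheaf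
      two_sided_ideal_in_topology_F[OF assms(2)]
    show False by (auto simp: is_sheaf_def bij_betw_def)
  qed
next
  assume "e \<in> m"
  with assms(2) have "left_principal e \<subseteq> m"
    by (rule left_principal_subset_two_sided_ideal)
  then show "\<forall>S :: 's set. is_sheaf (topology_F m) (pstar_carrier e S) (pstar_act e)"
    using assms(1) by (auto simp: topology_F_def intro!: is_sheaf_pstar_if_left_principal_covered)
qed

end
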